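(* Let $d_d\le d_f$ be positive integers, let $f:\mathbb{F}_q^k\to\mathrm{Im}(f)$ be a $(d_f-1)$-locally binary function, and suppose there exists a systematic $[n,k,d_d]$ linear code over $\mathbb{F}_q$ (generator matrix $[I_k\mid P]$). Then $r_f(k:d_d,d_f)\le n-k+d_f-d_d$.
   Context: $d(\cdot,\cdot)$ is Hamming distance. The function ball of $f$ of radius $\rho$ around $u$ is $B_f(u,\rho)=\{f(u'):u'\in\mathbb{F}_q^k,\ d(u,u')\le\rho\}$; $f$ is $\rho$-locally binary if $|B_f(u,\rho)|\le 2$ for all $u\in\mathbb{F}_q^k$. For integers $0\le d_d\le d_f$, an $(f\!:d_d,d_f)$-FCC with redundancy $r$ is a systematic encoding $\mathfrak{C}_f(u)=(u,p_u)\in\mathbb{F}_q^{k+r}$ with $d(\mathfrak{C}_f(u_1),\mathfrak{C}_f(u_2))\ge d_d$ whenever $u_1\ne u_2$ and $\ge d_f$ whenever $f(u_1)\ne f(u_2)$; $r_f(k:d_d,d_f)$ is the minimum such $r$. *)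

theory Defs
  imports Main
begin

definition hamming :: "'a list \<Rightarrow> 'a list \<Rightarrow> nat" where
  "hamming x y = card {i. i < length x \<and> i < length y \<and> x ! i \<noteq> y ! i}"

definition vecs :: "nat \<Rightarrow> 'a list set" where
  "vecs m = {u. length u = m}"

definition fun_ball :: "nat \<Rightarrow> ('a list \<Rightarrow> 'b) \<Rightarrow> 'a list \<Rightarrow> nat \<Rightarrow> 'b set" where
  "fun_ball k f u \<rho> = {f u' | u'. u' \<in> vecs k \<and> hamming u u' \<le> \<rho>}"

definition locally_binary :: "nat \<Rightarrow> ('a list \<Rightarrow> 'b) \<Rightarrow> nat \<Rightarrow> bool" where
  "locally_binary k f \<rho> \<longleftrightarrow> (\<forall>u \<in> vecs k. card (fun_ball k f u \<rho>) \<le> 2)"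

definition is_FCC :: "nat \<Rightarrow> ('a list \<Rightarrow> 'b) \<Rightarrow> nat \<Rightarrow> nat \<Rightarrow> nat \<Rightarrow> ('a list \<Rightarrow> 'a list) \<Rightarrow> bool" where
  "is_FCC k f dd df r p \<longleftrightarrow>
     (\<forall>u \<in> vecs k. length (p u) = r) \<and>
     (\<forall>u1 \<in> vecs k. \<forall>u2 \<in> vecs k. u1 \<noteq> u2 \<longrightarrow> hamming (u1 @ p u1) (u2 @ p u2) \<ge> dd) \<and>
     (\<forall>u1 \<in> vecs k. \<forall>u2 \<in> vecs k. f u1 \<noteq> f u2 \<longrightarrow> hamming (u1 @ p u1) (u2 @ p u2) \<ge> df)"

definition r_f :: "nat \<Rightarrow> ('a list \<Rightarrow> 'b) \<Rightarrow> nat \<Rightarrow> nat \<Rightarrow> nat" where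
  "r_f k f dd df = (LEAST r. \<exists>p :: 'a list \<Rightarrow> 'a list. is_FCC k f dd df r p)"

text \<open>Systematic linear encoding with generator matrix [I_k | P], P a k x (n-k) matrix.\<close>
definition sys_enc :: "nat \<Rightarrow> nat \<Rightarrow> (nat \<Rightarrow> nat \<Rightarrow> 'a::comm_semiring_0) \<Rightarrow> 'a list \<Rightarrow> 'a list" where
  "sys_enc k n P u = u @ map (\<lambda>j. \<Sum>i<k. u ! i * P i j) [0..<n - k]"

definition sys_code_min_dist :: "nat \<Rightarrow> nat \<Rightarrow> (nat \<Rightarrow> nat \<Rightarrow> 'a::comm_semiring_0) \<Rightarrow> nat \<Rightarrow> bool" where
  "sys_code_min_dist k n P d \<longleftrightarrow>
     (\<forall>u1 \<in> vecs k. \<forall>u2 \<in> vecs k. u1 \<noteq> u2 \<longrightarrow> hamming (sys_enc k n P u1) (sys_enc k n P u2) \<ge> d) \<and>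
     (\<exists>u1 \<in> vecs k. \<exists>u2 \<in> vecs k. u1 \<noteq> u2 \<and> hamming (sys_enc k n P u1) (sys_enc k n P u2) = d)"

end

theory Submission
  imports Defs
begin

text \<open>Call two messages u, v adjacent if d(u, v) < d_f and f(u) \<noteq> f(v). Local binarity of
  radius d_f - 1 says that all neighbours of a message carry the same f-value, so along any path
  of this graph f alternates between two values; hence every connected component is 2-coloured by
  "f(u) equals f at a fixed representative of the component". Appending the colour, repeated
  d_f - d_d times, to the parity part of the given [n, k, d_d] code separates adjacent messages by
  d_d + (d_f - d_d); all other pairs with different f-values already have distance at least d_f
  in their systematic part.\<close>

lemma hamming_conv_length_filter_zip:
  "hamming x y = length (filter (\<lambda>(a, b). a \<noteq> b) (zip x y))"
  unfolding hamming_def length_filter_conv_card by (rule arg_cong[where f = card]) auto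

lemma hamming_append:
  assumes "length a = length c"
  shows "hamming (a @ b) (c @ d) = hamming a c + hamming b d"
  using assms by (simp add: hamming_conv_length_filter_zip)

lemma hamming_self [simp]: "hamming u u = 0"
  by (simp add: hamming_def)

lemma hamming_sym: "hamming u v = hamming v u"
  unfolding hamming_def by (metis (mono_tags, lifting))

lemma hamming_replicate:
  assumes "x \<noteq> y"
  shows "hamming (replicate m x) (replicate m y) = m"
  using assms by (simp add: hamming_conv_length_filter_zip)

lemma finite_vecs: "finite (vecs k :: 'a::finite list set)"
  unfolding vecs_def using finite_lists_length_eq[of "UNIV :: 'a set" k] by simp

lemma locally_binary_ball_values_eq:
  fixes f :: "'a::finite list \<Rightarrow> 'b"
  assumes "locally_binary k f \<rho>" and "w \<in> vecs k"
    and "x \<in> vecs k" "hamming w x \<le> \<rho>" "f x \<noteq> f w"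
    and "y \<in> vecs k" "hamming w y \<le> \<rho>" "f y \<noteq> f w"
  shows "f x = f y"
proof (rule ccontr)
  assume "f x \<noteq> f y"
  then have "3 = card {f w, f x, f y}"
    using assms by auto
  also have "\<dots> \<le> card (fun_ball k f w \<rho>)"
  proof (rule card_mono)
    have "fun_ball k f w \<rho> \<subseteq> f ` vecs k"
      unfolding fun_ball_def by auto
    then show "finite (fun_ball k f w \<rho>)"
      by (rule finite_subset) (intro finite_imageI finite_vecs)
    show "{f w, f x, f y} \<subseteq> fun_ball k f w \<rho>"
      using assms unfolding fun_ball_def by auto
  qed
  also have "\<dots> \<le> 2"
    using assms unfolding locally_binary_def by blast
  finally show False by simp
qed

lemma rtranclp_value_eq_or_neighbour_value_eq:
  assumes "symp R" and neighbours_agree: "\<And>w x y. R w x \<Longrightarrow> R w y \<Longrightarrow> f x = f y"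
    and "R\<^sup>*\<^sup>* r w"
  shows "f w = f r \<or> (\<exists>x. R w x \<and> f x = f r)"
  using \<open>R\<^sup>*\<^sup>* r w\<close>
proof (induction rule: rtranclp_induct)
  case base
  then show ?case by simp
next
  case (step y z)
  show ?case
  proof (cases "f y = f r")
    case True
    then show ?thesis
      using \<open>R y z\<close> \<open>symp R\<close> by (blast dest: sympD)
  next
    case False
    then obtain x where "R y x" "f x = f r"
      using step.IH by blast
    then show ?thesis
      using neighbours_agree[OF _ \<open>R y z\<close>] by metis
  qed
qed

lemma two_colouring_if_neighbours_agree:
  assumes "symp R"
    and adjacent_differ: "\<And>u v. R u v \<Longrightarrow> f u \<noteq> f v"
    and neighbours_agree: "\<And>w x y. R w x \<Longrightarrow> R w y \<Longrightarrow> f x = f y"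
  obtains c :: "'a \<Rightarrow> bool" where "\<And>u v. R u v \<Longrightarrow> c u \<noteq> c v"
proof
  define rep where "rep u = (SOME r. R\<^sup>*\<^sup>* r u)" for u
  have rep_reaches: "R\<^sup>*\<^sup>* (rep u) u" for u
    unfolding rep_def by (rule someI[of _ u]) simp
  fix u v
  assume "R u v"
  have "R\<^sup>*\<^sup>* r u = R\<^sup>*\<^sup>* r v" for r
    using \<open>R u v\<close> \<open>symp R\<close>
    by (meson rtranclp.rtrancl_into_rtrancl sympD)
  then have rep_eq: "rep v = rep u"
    unfolding rep_def by simp
  have "f u \<noteq> f v"
    using adjacent_differ[OF \<open>R u v\<close>] .
  moreover have "f u = f (rep u) \<or> f v = f (rep u)"
  proof -
    have "f u = f (rep u) \<or> (\<exists>x. R u x \<and> f x = f (rep u))"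
      using \<open>symp R\<close> neighbours_agree rep_reaches by (rule rtranclp_value_eq_or_neighbour_value_eq)
    then show ?thesis
      using neighbours_agree[OF _ \<open>R u v\<close>] by auto
  qed
  ultimately show "(f u = f (rep u)) \<noteq> (f v = f (rep v))"
    using rep_eq by auto
qed

definition fun_adjacent :: "nat \<Rightarrow> ('a list \<Rightarrow> 'b) \<Rightarrow> nat \<Rightarrow> 'a list \<Rightarrow> 'a list \<Rightarrow> bool" where
  "fun_adjacent k f \<delta> u v \<longleftrightarrow> u \<in> vecs k \<and> v \<in> vecs k \<and> hamming u v < \<delta> \<and> f u \<noteq> f v"

lemma symp_fun_adjacent: "symp (fun_adjacent k f \<delta>)"
  unfolding fun_adjacent_def by (rule sympI) (auto simp: hamming_sym)

lemma locally_binary_fun_adjacent_values_eq: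
  fixes f :: "'a::finite list \<Rightarrow> 'b"
  assumes "locally_binary k f (\<delta> - 1)"
    and "fun_adjacent k f \<delta> w x" "fun_adjacent k f \<delta> w y"
  shows "f x = f y"
proof (rule locally_binary_ball_values_eq[OF assms(1)])
  show "w \<in> vecs k" "x \<in> vecs k" "y \<in> vecs k" "f x \<noteq> f w" "f y \<noteq> f w"
    using assms(2,3) unfolding fun_adjacent_def by auto
  show "hamming w x \<le> \<delta> - 1" "hamming w y \<le> \<delta> - 1"
    using assms(2,3) unfolding fun_adjacent_def by linarith+
qed

definition sys_parity :: "nat \<Rightarrow> nat \<Rightarrow> (nat \<Rightarrow> nat \<Rightarrow> 'a::comm_semiring_0) \<Rightarrow> 'a list \<Rightarrow> 'a list"
  where "sys_parity k n P u = map (\<lambda>j. \<Sum>i<k. u ! i * P i j) [0..<n - k]"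

lemma sys_enc_eq_append_sys_parity: "sys_enc k n P u = u @ sys_parity k n P u"
  by (simp add: sys_enc_def sys_parity_def)

lemma length_sys_parity [simp]: "length (sys_parity k n P u) = n - k"
  by (simp add: sys_parity_def)

lemma is_FCC_sys_parity_append_colour:
  fixes c :: "'a::comm_semiring_0 list \<Rightarrow> 'a"
  assumes "dd \<le> df"
    and code_dist: "\<And>u1 u2. u1 \<in> vecs k \<Longrightarrow> u2 \<in> vecs k \<Longrightarrow> u1 \<noteq> u2 \<Longrightarrow>
      dd \<le> hamming (sys_enc k n P u1) (sys_enc k n P u2)"
    and colour_differs: "\<And>u1 u2. u1 \<in> vecs k \<Longrightarrow> u2 \<in> vecs k \<Longrightarrow> f u1 \<noteq> f u2 \<Longrightarrow>
      hamming u1 u2 < df \<Longrightarrow> c u1 \<noteq> c u2"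
  shows "is_FCC k f dd df (n - k + df - dd)
    (\<lambda>u. sys_parity k n P u @ replicate (df - dd) (c u))"
proof -
  define p where "p u = sys_parity k n P u @ replicate (df - dd) (c u)" for u
  have dist: "hamming (u1 @ p u1) (u2 @ p u2) = hamming (sys_enc k n P u1) (sys_enc k n P u2)
      + hamming (replicate (df - dd) (c u1)) (replicate (df - dd) (c u2))"
    and sys_dist: "hamming u1 u2 \<le> hamming (sys_enc k n P u1) (sys_enc k n P u2)"
    if "u1 \<in> vecs k" "u2 \<in> vecs k" for u1 u2
    using that by (simp_all add: p_def sys_enc_eq_append_sys_parity hamming_append vecs_def)
  have "dd \<le> hamming (u1 @ p u1) (u2 @ p u2)"
    if u: "u1 \<in> vecs k" "u2 \<in> vecs k" and "u1 \<noteq> u2" for u1 u2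
    using dist[OF u] code_dist[OF u \<open>u1 \<noteq> u2\<close>] by simp
  moreover have "df \<le> hamming (u1 @ p u1) (u2 @ p u2)"
    if u: "u1 \<in> vecs k" "u2 \<in> vecs k" and "f u1 \<noteq> f u2" for u1 u2
  proof (cases "hamming u1 u2 < df")
    case True
    then have "c u1 \<noteq> c u2"
      using colour_differs u \<open>f u1 \<noteq> f u2\<close> by blast
    moreover have "u1 \<noteq> u2"
      using \<open>f u1 \<noteq> f u2\<close> by blast
    ultimately show ?thesis
      using dist[OF u] code_dist[OF u] \<open>dd \<le> df\<close> by (simp add: hamming_replicate)
  next
    case False
    then show ?thesis
      using dist[OF u] sys_dist[OF u] by simp
  qed
  moreover have "length (p u) = n - k + df - dd" for u
    using \<open>dd \<le> df\<close> by (simp add: p_def)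
  ultimately show ?thesis
    unfolding is_FCC_def p_def by blast
qed

theorem lemma7:
  fixes f :: "('a::{finite,field}) list \<Rightarrow> 'b"
    and P :: "nat \<Rightarrow> nat \<Rightarrow> 'a"
    and k n dd df :: nat
  assumes "0 < dd" and "dd \<le> df"
    and "locally_binary k f (df - 1)"
    and "k \<le> n"
    and "sys_code_min_dist k n P dd"
  shows "r_f k f dd df \<le> n - k + df - dd"
proof -
  obtain c :: "'a list \<Rightarrow> bool" where c: "\<And>u v. fun_adjacent k f df u v \<Longrightarrow> c u \<noteq> c v"
    using two_colouring_if_neighbours_agree[of "fun_adjacent k f df" f] symp_fun_adjacent
      locally_binary_fun_adjacent_values_eq[OF assms(3)]
    by (blast dest: fun_adjacent_def[THEN iffD1])
  have "is_FCC k f dd df (n - k + df - dd)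
      (\<lambda>u. sys_parity k n P u @ replicate (df - dd) (of_bool (c u) :: 'a))"
  proof (rule is_FCC_sys_parity_append_colour)
    show "dd \<le> hamming (sys_enc k n P u1) (sys_enc k n P u2)"
      if "u1 \<in> vecs k" "u2 \<in> vecs k" "u1 \<noteq> u2" for u1 u2
      using assms(5) that unfolding sys_code_min_dist_def by blast
    show "(of_bool (c u1) :: 'a) \<noteq> of_bool (c u2)"
      if "u1 \<in> vecs k" "u2 \<in> vecs k" "f u1 \<noteq> f u2" "hamming u1 u2 < df" for u1 u2
      using c[of u1 u2] that by (simp add: fun_adjacent_def)
  qed fact
  then show ?thesis
    unfolding r_f_def by (blast intro: Least_le)
qed

end
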